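(* Consider an MPI computation in which every call by an MPI rank to a collective communication function is replaced by the two-phase wrapper (Phase 1: a call to MPI\_Barrier() on the same ranks, the "trivial barrier"; Phase 2: the original collective communication call), and in which checkpointing is governed by the two-phase checkpoint protocol described in the context. Then an MPI rank is never inside a collective communication call (Phase 2 of the wrapper) when a do-ckpt (checkpoint) message is received from the checkpoint coordinator.
   Context: Setting: a set of MPI ranks (processes) running concurrently, plus a separate checkpoint coordinator process that exchanges messages with each rank (each rank has a helper thread that receives and answers coordinator messages asynchronously). Events are ordered by Lamport's happens-before relation. Barrier axiom: for a given invocation of an MPI barrier, it never happens that a rank A exits the barrier before (under happens-before) another participating rank B enters that barrier. Two-phase wrapper: whenever the application invokes an MPI collective communication function, it instead executes a wrapper which first calls MPI\_Barrier() over the participating ranks (the "trivial barrier", Phase 1) and then calls the original collective communication function (Phase 2). A rank is "inCollectiveWrapper" while executing this wrapper. Checkpoint protocol. Messages: intend-to-ckpt, extra-iteration, do-ckpt. Rank states reported: ready, in-phase-1, exit-phase-2. Coordinator: send intend-to-ckpt to all ranks and receive a response from each rank; while some rank responded with state exit-phase-2, send extra-iteration to all ranks and receive a response from each rank; then send do-ckpt to all ranks. Rank, on receiving intend-to-ckpt or extra-iteration: if not in a collective wrapper, reply "ready"; if in a collective wrapper and in Phase 1, reply "in-phase-1"; if in a collective wrapper and in Phase 2, first finish executing the collective communication call, then reply "exit-phase-2" and set its state to ready. In all cases the rank then continues executing but waits (blocks) before its next collective communication call (i.e., before entering Phase 2 of any wrapper). Rank, on receiving do-ckpt: perform its local checkpoint;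 then, if it is waiting before a collective communication call, unblock and continue executing. *)

theory Defs
  imports Main
begin

text \<open>'r : MPI ranks; 'c : identifiers of collective-communication invocations.
  parts c : set of ranks participating in invocation c.
  calls r : the sequence of collective invocations issued by the application on rank r
  (each of them executed through the two-phase wrapper).\<close>

text \<open>Position of a rank w.r.t. the wrapper:
  Outside          -- not inCollectiveWrapper;
  InPhase1 c b     -- in Phase 1 of the wrapper for c (b = True: has exited the trivial
                      barrier but has not yet entered the collective call, i.e. still Phase 1);
  InPhase2 c       -- inside the original collective communication call (Phase 2).\<close>
datatype 'c loc = Outside | InPhase1 'c bool | InPhase2 'c

datatype msg = IntendCkpt | ExtraIteration | DoCkpt

datatype rstat = St_ready | St_in_phase_1 | St_exit_phase_2

datatype 'r cstate = CIdle | CCollect "'r \<Rightarrow> rstat option"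

record ('r, 'c) st =
  loc      :: "'r \<Rightarrow> 'c loc"
  idx      :: "'r \<Rightarrow> nat"            \<comment> \<open>number of completed wrapper invocations\<close>
  waiting  :: "'r \<Rightarrow> bool"            \<comment> \<open>must wait before its next collective call\<close>
  awaiting :: "'r \<Rightarrow> bool"            \<comment> \<open>helper must reply exit-phase-2 when Phase 2 finishes\<close>
  inbox    :: "'r \<Rightarrow> msg list"        \<comment> \<open>FIFO channel coordinator -> rank\<close>
  outbox   :: "'r \<Rightarrow> rstat list"      \<comment> \<open>FIFO channel rank -> coordinator\<close>
  coord    :: "'r cstate"
  entered  :: "('r \<times> 'c) set"         \<comment> \<open>(r,c): rank r has entered the trivial barrier of c\<close>

datatype 'r event =
    E_enter_wrapper 'r | E_exit_barrier 'r | E_enter_phase2 'r | E_exit_phase2 'r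
  | E_helper_recv 'r | E_recv_do_ckpt 'r
  | E_coord_start | E_coord_recv 'r | E_coord_decide

definition init_st :: "('r, 'c) st" where
  "init_st = \<lparr> loc = (\<lambda>_. Outside), idx = (\<lambda>_. 0), waiting = (\<lambda>_. False),
     awaiting = (\<lambda>_. False), inbox = (\<lambda>_. []), outbox = (\<lambda>_. []),
     coord = CIdle, entered = {} \<rparr>"

definition wf_mpi :: "('c \<Rightarrow> 'r set) \<Rightarrow> ('r \<Rightarrow> 'c list) \<Rightarrow> bool" where
  "wf_mpi parts calls \<longleftrightarrow> (\<forall>r. distinct (calls r)) \<and> (\<forall>r c. c \<in> set (calls r) \<longleftrightarrow> r \<in> parts c)"

inductive step :: "('c \<Rightarrow> 'r set) \<Rightarrow> ('r \<Rightarrow> 'c list) \<Rightarrow> ('r, 'c) st \<Rightarrow> 'r event \<Rightarrow> ('r, 'c) st \<Rightarrow> bool"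
  for parts :: "'c \<Rightarrow> 'r set" and calls :: "'r \<Rightarrow> 'c list" where
  \<comment> \<open>the application calls its next collective: the wrapper starts, entering the trivial barrier\<close>
  enter_wrapper: "\<lbrakk> loc s r = Outside; idx s r < length (calls r); c = calls r ! idx s r \<rbrakk> \<Longrightarrow>
     step parts calls s (E_enter_wrapper r)
       (s\<lparr> loc := (loc s)(r := InPhase1 c False), entered := insert (r, c) (entered s) \<rparr>)"
  \<comment> \<open>barrier axiom: exit only after every participant has entered the barrier\<close>
| exit_barrier: "\<lbrakk> loc s r = InPhase1 c False; \<forall>r' \<in> parts c. (r', c) \<in> entered s \<rbrakk> \<Longrightarrow>
     step parts calls s (E_exit_barrier r) (s\<lparr> loc := (loc s)(r := InPhase1 c True) \<rparr>)"
| enter_phase2: "\<lbrakk> loc s r = InPhase1 c True; \<not> waiting s r \<rbrakk> \<Longrightarrow>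
     step parts calls s (E_enter_phase2 r) (s\<lparr> loc := (loc s)(r := InPhase2 c) \<rparr>)"
| exit_phase2: "loc s r = InPhase2 c \<Longrightarrow>
     step parts calls s (E_exit_phase2 r)
       (s\<lparr> loc := (loc s)(r := Outside), idx := (idx s)(r := Suc (idx s r)),
           awaiting := (awaiting s)(r := False),
           outbox := (outbox s)(r := outbox s r @ (if awaiting s r then [St_exit_phase_2] else [])) \<rparr>)"
| helper_ready: "\<lbrakk> inbox s r = m # ms; m \<noteq> DoCkpt; \<not> awaiting s r; loc s r = Outside \<rbrakk> \<Longrightarrow>
     step parts calls s (E_helper_recv r)
       (s\<lparr> inbox := (inbox s)(r := ms), waiting := (waiting s)(r := True),
           outbox := (outbox s)(r := outbox s r @ [St_ready]) \<rparr>)"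
| helper_phase1: "\<lbrakk> inbox s r = m # ms; m \<noteq> DoCkpt; \<not> awaiting s r; loc s r = InPhase1 c b \<rbrakk> \<Longrightarrow>
     step parts calls s (E_helper_recv r)
       (s\<lparr> inbox := (inbox s)(r := ms), waiting := (waiting s)(r := True),
           outbox := (outbox s)(r := outbox s r @ [St_in_phase_1]) \<rparr>)"
| helper_phase2: "\<lbrakk> inbox s r = m # ms; m \<noteq> DoCkpt; \<not> awaiting s r; loc s r = InPhase2 c \<rbrakk> \<Longrightarrow>
     step parts calls s (E_helper_recv r)
       (s\<lparr> inbox := (inbox s)(r := ms), waiting := (waiting s)(r := True),
           awaiting := (awaiting s)(r := True) \<rparr>)"
  \<comment> \<open>helper receives do-ckpt: local checkpoint, then unblock\<close>
| recv_do_ckpt: "\<lbrakk> inbox s r = DoCkpt # ms; \<not> awaiting s r \<rbrakk> \<Longrightarrow>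
     step parts calls s (E_recv_do_ckpt r)
       (s\<lparr> inbox := (inbox s)(r := ms), waiting := (waiting s)(r := False) \<rparr>)"
| coord_start: "coord s = CIdle \<Longrightarrow>
     step parts calls s E_coord_start
       (s\<lparr> inbox := (\<lambda>r. inbox s r @ [IntendCkpt]), coord := CCollect (\<lambda>_. None) \<rparr>)"
| coord_recv: "\<lbrakk> coord s = CCollect resp; resp r = None; outbox s r = a # as \<rbrakk> \<Longrightarrow>
     step parts calls s (E_coord_recv r)
       (s\<lparr> outbox := (outbox s)(r := as), coord := CCollect (resp(r := Some a)) \<rparr>)"
| coord_extra: "\<lbrakk> coord s = CCollect resp; \<forall>r. resp r \<noteq> None; \<exists>r. resp r = Some St_exit_phase_2 \<rbrakk> \<Longrightarrow>
     step parts calls s E_coord_decide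
       (s\<lparr> inbox := (\<lambda>r. inbox s r @ [ExtraIteration]), coord := CCollect (\<lambda>_. None) \<rparr>)"
| coord_do: "\<lbrakk> coord s = CCollect resp; \<forall>r. resp r \<noteq> None; \<forall>r. resp r \<noteq> Some St_exit_phase_2 \<rbrakk> \<Longrightarrow>
     step parts calls s E_coord_decide
       (s\<lparr> inbox := (\<lambda>r. inbox s r @ [DoCkpt]), coord := CIdle \<rparr>)"

inductive reach :: "('c \<Rightarrow> 'r set) \<Rightarrow> ('r \<Rightarrow> 'c list) \<Rightarrow> ('r, 'c) st \<Rightarrow> bool"
  for parts calls where
  reach_init: "reach parts calls init_st"
| reach_step: "\<lbrakk> reach parts calls s; step parts calls s e s' \<rbrakk> \<Longrightarrow> reach parts calls s'"

end

theory Submission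
  imports Defs
begin

text \<open>A rank that answers a round with anything but exit-phase-2 is outside the collective
  call and blocked before its next one, and it stays so until it consumes do-ckpt; a rank caught
  inside the collective call answers exit-phase-2 only after leaving it, which forces another
  round. Hence do-ckpt, which is sent only after a round without exit-phase-2 answers, always
  finds its receiver blocked outside Phase 2. This is captured by an invariant describing, for
  each state of the coordinator, the channels and the position of every rank.\<close>

fun in_phase2 :: "'c loc \<Rightarrow> bool" where
  "in_phase2 (InPhase2 c) = True"
| "in_phase2 _ = False"

definition parked :: "('r, 'c) st \<Rightarrow> 'r \<Rightarrow> bool" where
  "parked s r \<longleftrightarrow> waiting s r \<and> \<not> in_phase2 (loc s r)"

text \<open>The request of the current round is still undelivered; it may be preceded by the
  do-ckpt of the previous checkpoint.\<close>
definition request_pending :: "('r, 'c) st \<Rightarrow> 'r \<Rightarrow> bool" where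
  "request_pending s r \<longleftrightarrow>
     (\<exists>m. m \<noteq> DoCkpt \<and> (inbox s r = [m] \<or> inbox s r = [DoCkpt, m] \<and> parked s r))"

text \<open>During a round a rank has either answered already, or not yet received the request,
  or received it inside Phase 2 and defers its answer, or has its answer in transit.\<close>
fun rank_inv :: "'r cstate \<Rightarrow> ('r, 'c) st \<Rightarrow> 'r \<Rightarrow> bool" where
  "rank_inv CIdle s r \<longleftrightarrow>
     outbox s r = [] \<and> \<not> awaiting s r \<and> (inbox s r = [] \<or> inbox s r = [DoCkpt] \<and> parked s r)"
| "rank_inv (CCollect resp) s r \<longleftrightarrow>
     (resp r \<noteq> None \<and> inbox s r = [] \<and> outbox s r = [] \<and> \<not> awaiting s r
        \<and> (resp r \<noteq> Some St_exit_phase_2 \<longrightarrow> parked s r))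
   \<or> (resp r = None \<and> outbox s r = [] \<and> \<not> awaiting s r \<and> request_pending s r)
   \<or> (resp r = None \<and> inbox s r = [] \<and> outbox s r = [] \<and> awaiting s r \<and> in_phase2 (loc s r))
   \<or> (resp r = None \<and> inbox s r = [] \<and> \<not> awaiting s r
        \<and> (\<exists>a. outbox s r = [a] \<and> (a \<noteq> St_exit_phase_2 \<longrightarrow> parked s r)))"

definition protocol_inv :: "('r, 'c) st \<Rightarrow> bool" where
  "protocol_inv s \<longleftrightarrow> (\<forall>r. rank_inv (coord s) s r)"

lemma protocol_inv_init: "protocol_inv init_st"
  by (simp add: protocol_inv_def init_st_def)

lemma rank_inv_cong:
  assumes "inbox s' r = inbox s r" "outbox s' r = outbox s r" "awaiting s' r = awaiting s r"
    and "waiting s' r = waiting s r" "loc s' r = loc s r"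
  shows "rank_inv c s' r = rank_inv c s r"
  using assms by (cases c) (simp_all add: parked_def request_pending_def)

lemma protocol_inv_local_step:
  assumes "protocol_inv s" "coord s' = coord s"
    and "\<And>r'. r' \<noteq> r \<Longrightarrow> inbox s' r' = inbox s r' \<and> outbox s' r' = outbox s r' \<and>
       awaiting s' r' = awaiting s r' \<and> waiting s' r' = waiting s r' \<and> loc s' r' = loc s r'"
    and "rank_inv (coord s) s r \<Longrightarrow> rank_inv (coord s) s' r"
  shows "protocol_inv s'"
  unfolding protocol_inv_def
proof
  fix r'
  have "rank_inv (coord s) s r'"
    using assms(1) by (simp add: protocol_inv_def)
  then show "rank_inv (coord s') s' r'"
    using assms(2-4) rank_inv_cong[of s' r' s] by (cases "r' = r") auto
qed

lemma rank_inv_answered: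
  assumes "rank_inv (CCollect resp) s r" and "resp r \<noteq> None"
  shows "inbox s r = [] \<and> outbox s r = [] \<and> \<not> awaiting s r
    \<and> (resp r \<noteq> Some St_exit_phase_2 \<longrightarrow> parked s r)"
  using assms by auto

lemma protocol_inv_step:
  assumes "step parts calls s e s'" and "protocol_inv s"
  shows "protocol_inv s'"
  using assms(1)
proof cases
  case (enter_wrapper r c)
  show ?thesis
    by (rule protocol_inv_local_step[OF assms(2), where r = r]; cases "coord s")
      (auto simp: enter_wrapper parked_def request_pending_def)
next
  case (exit_barrier r c)
  show ?thesis
    by (rule protocol_inv_local_step[OF assms(2), where r = r]; cases "coord s")
      (auto simp: exit_barrier parked_def request_pending_def)
next
  case (enter_phase2 r c)
  show ?thesis
    by (rule protocol_inv_local_step[OF assms(2), where r = r]; cases "coord s")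
      (auto simp: enter_phase2 parked_def request_pending_def)
next
  case (exit_phase2 r c)
  show ?thesis
    by (rule protocol_inv_local_step[OF assms(2), where r = r]; cases "coord s")
      (auto simp: exit_phase2 parked_def request_pending_def)
next
  case (helper_ready r m ms)
  show ?thesis
    by (rule protocol_inv_local_step[OF assms(2), where r = r]; cases "coord s")
      (auto simp: helper_ready parked_def request_pending_def)
next
  case (helper_phase1 r m ms c b)
  show ?thesis
    by (rule protocol_inv_local_step[OF assms(2), where r = r]; cases "coord s")
      (auto simp: helper_phase1 parked_def request_pending_def)
next
  case (helper_phase2 r m ms c)
  show ?thesis
    by (rule protocol_inv_local_step[OF assms(2), where r = r]; cases "coord s")
      (auto simp: helper_phase2 parked_def request_pending_def)
next
  case (recv_do_ckpt r ms)
  show ?thesis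
    by (rule protocol_inv_local_step[OF assms(2), where r = r]; cases "coord s")
      (auto simp: recv_do_ckpt parked_def request_pending_def)
next
  case coord_start
  then show ?thesis
    using assms(2) by (auto simp: protocol_inv_def parked_def request_pending_def)
next
  case (coord_recv resp r a as)
  show ?thesis
    unfolding protocol_inv_def
  proof
    fix r'
    have "rank_inv (coord s) s r'"
      using assms(2) by (simp add: protocol_inv_def)
    then show "rank_inv (coord s') s' r'"
      using coord_recv by (cases "r' = r") (auto simp: parked_def request_pending_def)
  qed
next
  case (coord_extra resp)
  show ?thesis
    unfolding protocol_inv_def
  proof
    fix r
    have "rank_inv (CCollect resp) s r"
      using assms(2) coord_extra by (simp add: protocol_inv_def)
    then show "rank_inv (coord s') s' r"
      using coord_extra rank_inv_answered by (auto simp: parked_def request_pending_def)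
  qed
next
  case (coord_do resp)
  show ?thesis
    unfolding protocol_inv_def
  proof
    fix r
    have "rank_inv (CCollect resp) s r"
      using assms(2) coord_do by (simp add: protocol_inv_def)
    then show "rank_inv (coord s') s' r"
      using coord_do rank_inv_answered by (auto simp: parked_def)
  qed
qed

lemma reach_protocol_inv: "reach parts calls s \<Longrightarrow> protocol_inv s"
  by (induction rule: reach.induct) (auto intro: protocol_inv_init protocol_inv_step)

lemma rank_inv_do_ckpt_parked:
  assumes "rank_inv c s r" and "inbox s r = DoCkpt # ms"
  shows "parked s r"
  using assms by (cases c) (auto simp: request_pending_def)

theorem theorem1:
  fixes parts :: "'c \<Rightarrow> 'r set" and calls :: "'r \<Rightarrow> 'c list"
  assumes "wf_mpi parts calls"
    and "reach parts calls s"
    and "step parts calls s (E_recv_do_ckpt r) s'"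
  shows "\<forall>c. loc s r \<noteq> InPhase2 c"
proof -
  from assms(3) obtain ms where "inbox s r = DoCkpt # ms"
    by cases auto
  moreover have "rank_inv (coord s) s r"
    using reach_protocol_inv[OF assms(2)] by (simp add: protocol_inv_def)
  ultimately have "parked s r"
    by (rule rank_inv_do_ckpt_parked[rotated])
  then show ?thesis
    by (auto simp: parked_def)
qed

end
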